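(* Let $A$ be a non-empty set and let $M$ be an equidecomposable magma. Then $\mathbb{M}_A\times M\cong \mathbb{M}_{(A\times M)\cup(\mathbb{M}_A\times \mathrm{Indec}(M))}$.
   Context: A magma is a set with a binary operation $+$; it is equidecomposable if $x+y=x'+y'$ implies $x=x'$ and $y=y'$. $\mathbb{M}_X$ denotes the free magma on a set $X$ (non-associative words over $X$ with $x+y=(x,y)$). The direct product $\mathbb{M}_A\times M$ carries the componentwise operation. $\mathrm{Indec}(M)=M\setminus(M+M)$ is the set of indecomposable elements of $M$ (those not of the form $x+y$). *)

theory Defs
  imports Main
begin

datatype 'a fmagma = Gen 'a | Node "'a fmagma" "'a fmagma"

primrec gens :: "'a fmagma \<Rightarrow> 'a set" where
  "gens (Gen a) = {a}"
| "gens (Node s t) = gens s \<union> gens t"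

text \<open>Carrier of the free magma on a set X; its operation is Node.\<close>
definition free_magma :: "'a set \<Rightarrow> 'a fmagma set" where
  "free_magma X = {t. gens t \<subseteq> X}"

definition magma :: "'m set \<Rightarrow> ('m \<Rightarrow> 'm \<Rightarrow> 'm) \<Rightarrow> bool" where
  "magma M f \<longleftrightarrow> (\<forall>x\<in>M. \<forall>y\<in>M. f x y \<in> M)"

definition equidecomposable :: "'m set \<Rightarrow> ('m \<Rightarrow> 'm \<Rightarrow> 'm) \<Rightarrow> bool" where
  "equidecomposable M f \<longleftrightarrow>
     (\<forall>x\<in>M. \<forall>y\<in>M. \<forall>x'\<in>M. \<forall>y'\<in>M. f x y = f x' y' \<longrightarrow> x = x' \<and> y = y')"

definition Indec :: "'m set \<Rightarrow> ('m \<Rightarrow> 'm \<Rightarrow> 'm) \<Rightarrow> 'm set" where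
  "Indec M f = M - {f x y | x y. x \<in> M \<and> y \<in> M}"

definition prod_op :: "('a \<Rightarrow> 'a \<Rightarrow> 'a) \<Rightarrow> ('b \<Rightarrow> 'b \<Rightarrow> 'b) \<Rightarrow> ('a \<times> 'b) \<Rightarrow> ('a \<times> 'b) \<Rightarrow> ('a \<times> 'b)" where
  "prod_op f g p q = (f (fst p) (fst q), g (snd p) (snd q))"

definition magma_iso :: "'m set \<Rightarrow> ('m \<Rightarrow> 'm \<Rightarrow> 'm) \<Rightarrow> 'n set \<Rightarrow> ('n \<Rightarrow> 'n \<Rightarrow> 'n) \<Rightarrow> ('m \<Rightarrow> 'n) \<Rightarrow> bool" where
  "magma_iso M f N g h \<longleftrightarrow> bij_betw h M N \<and> (\<forall>x\<in>M. \<forall>y\<in>M. h (f x y) = g (h x) (h y))"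

definition magma_isomorphic :: "'m set \<Rightarrow> ('m \<Rightarrow> 'm \<Rightarrow> 'm) \<Rightarrow> 'n set \<Rightarrow> ('n \<Rightarrow> 'n \<Rightarrow> 'n) \<Rightarrow> bool" where
  "magma_isomorphic M f N g \<longleftrightarrow> (\<exists>h. magma_iso M f N g h)"

end

theory Submission
  imports Defs
begin

text \<open>
  A magma (N, +) is free on its indecomposable elements as soon as it is equidecomposable
  and every decomposition strictly lowers some natural-number size: then evaluating words over
  Indec N is a bijection onto N, injective by equidecomposability and surjective
  by induction on the size.
  The product of the free magma on A with an equidecomposable magma M satisfies
  both conditions, the size being that of the first component, and an element (w, m)
  of the product is decomposable exactly when both w and m are.
\<close>

primrec eval_fmagma :: "('b \<Rightarrow> 'b \<Rightarrow> 'b) \<Rightarrow> 'b fmagma \<Rightarrow> 'b" where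
  "eval_fmagma op (Gen x) = x"
| "eval_fmagma op (Node s t) = op (eval_fmagma op s) (eval_fmagma op t)"

lemma free_magma_Gen [simp]: "Gen x \<in> free_magma X \<longleftrightarrow> x \<in> X"
  by (simp add: free_magma_def)

lemma free_magma_Node [simp]:
  "Node s t \<in> free_magma X \<longleftrightarrow> s \<in> free_magma X \<and> t \<in> free_magma X"
  by (simp add: free_magma_def)

lemma magmaD: "magma N op \<Longrightarrow> x \<in> N \<Longrightarrow> y \<in> N \<Longrightarrow> op x y \<in> N"
  by (simp add: magma_def)

lemma equidecomposableD:
  "equidecomposable N op \<Longrightarrow> x \<in> N \<Longrightarrow> y \<in> N \<Longrightarrow> x' \<in> N \<Longrightarrow> y' \<in> N \<Longrightarrow>
    op x y = op x' y' \<Longrightarrow> x = x' \<and> y = y'"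
  unfolding equidecomposable_def by blast

lemma Indec_subset: "Indec N op \<subseteq> N"
  by (auto simp: Indec_def)

lemma op_notin_Indec: "x \<in> N \<Longrightarrow> y \<in> N \<Longrightarrow> op x y \<notin> Indec N op"
  by (auto simp: Indec_def)

lemma eval_fmagma_in:
  assumes "magma N op" and "X \<subseteq> N" and "t \<in> free_magma X"
  shows "eval_fmagma op t \<in> N"
  using assms(3) by (induction t) (use assms(1,2) magmaD in auto)

lemma inj_on_eval_fmagma:
  assumes "magma N op" and "equidecomposable N op" and "X \<subseteq> Indec N op"
  shows "inj_on (eval_fmagma op) (free_magma X)"
proof -
  have X_sub: "X \<subseteq> N"
    using assms(3) Indec_subset[of N op] by (rule order_trans)
  have eval_Node_notin: "eval_fmagma op (Node s t) \<notin> X"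
    if "s \<in> free_magma X" "t \<in> free_magma X" for s t
  proof -
    have "eval_fmagma op s \<in> N" "eval_fmagma op t \<in> N"
      using that by (auto intro: eval_fmagma_in[OF assms(1) X_sub])
    then have "eval_fmagma op (Node s t) \<notin> Indec N op"
      by (simp add: op_notin_Indec)
    then show ?thesis
      using assms(3) by blast
  qed
  have "s = t" if "s \<in> free_magma X" "t \<in> free_magma X" "eval_fmagma op s = eval_fmagma op t"
    for s t
    using that
  proof (induction s arbitrary: t)
    case (Gen x)
    then show ?case
      by (cases t) (use eval_Node_notin in force)+
  next
    case (Node s1 s2)
    show ?case
    proof (cases t)
      case (Gen y)
      then show ?thesis
        using Node.prems eval_Node_notin by force
    next
      case (Node t1 t2)
      with Node.prems have "eval_fmagma op s1 = eval_fmagma op t1 \<and> eval_fmagma op s2 = eval_fmagma op t2"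
        by (intro equidecomposableD[OF assms(2)]) (auto intro: eval_fmagma_in[OF assms(1) X_sub])
      with Node Node.prems show ?thesis
        by (auto intro: Node.IH)
    qed
  qed
  then show ?thesis
    by (auto intro: inj_onI)
qed

lemma Indec_generates:
  fixes \<mu> :: "'b \<Rightarrow> nat"
  assumes "magma N op"
    and size_less: "\<And>x y. x \<in> N \<Longrightarrow> y \<in> N \<Longrightarrow> \<mu> x < \<mu> (op x y) \<and> \<mu> y < \<mu> (op x y)"
  shows "N \<subseteq> eval_fmagma op ` free_magma (Indec N op)"
proof
  fix z assume "z \<in> N"
  then show "z \<in> eval_fmagma op ` free_magma (Indec N op)"
  proof (induction "\<mu> z" arbitrary: z rule: less_induct)
    case less
    show ?case
    proof (cases "z \<in> Indec N op")
      case True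
      then show ?thesis
        by (metis eval_fmagma.simps(1) free_magma_Gen image_eqI)
    next
      case False
      then obtain x y where "x \<in> N" "y \<in> N" "z = op x y"
        using \<open>z \<in> N\<close> by (auto simp: Indec_def)
      moreover from this obtain s t where "s \<in> free_magma (Indec N op)" "eval_fmagma op s = x"
        "t \<in> free_magma (Indec N op)" "eval_fmagma op t = y"
        using less.hyps size_less by blast
      ultimately show ?thesis
        by (metis eval_fmagma.simps(2) free_magma_Node image_eqI)
    qed
  qed
qed

lemma magma_iso_eval_fmagma_Indec:
  fixes \<mu> :: "'b \<Rightarrow> nat"
  assumes "magma N op" and "equidecomposable N op"
    and size_less: "\<And>x y. x \<in> N \<Longrightarrow> y \<in> N \<Longrightarrow> \<mu> x < \<mu> (op x y) \<and> \<mu> y < \<mu> (op x y)"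
  shows "magma_iso (free_magma (Indec N op)) Node N op (eval_fmagma op)"
proof -
  have "eval_fmagma op ` free_magma (Indec N op) \<subseteq> N"
    by (intro image_subsetI eval_fmagma_in[OF assms(1) Indec_subset])
  moreover have "N \<subseteq> eval_fmagma op ` free_magma (Indec N op)"
    by (rule Indec_generates[OF assms(1) size_less])
  ultimately have "eval_fmagma op ` free_magma (Indec N op) = N"
    by (rule subset_antisym)
  then show ?thesis
    using inj_on_eval_fmagma[OF assms(1,2) order_refl]
    by (simp add: magma_iso_def bij_betw_def)
qed

lemma magma_iso_inv_into:
  assumes "magma M f" and "magma_iso M f N g h"
  shows "magma_iso N g M f (inv_into M h)"
proof -
  have bij: "bij_betw h M N" and hom: "\<And>x y. x \<in> M \<Longrightarrow> y \<in> M \<Longrightarrow> h (f x y) = g (h x) (h y)"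
    using assms(2) by (auto simp: magma_iso_def)
  have "inv_into M h (g x y) = f (inv_into M h x) (inv_into M h y)"
    if "x \<in> N" "y \<in> N" for x y
  proof -
    have M_elems: "inv_into M h x \<in> M" "inv_into M h y \<in> M"
      using that bij bij_betw_inv_into bij_betw_apply by metis+
    have "g x y = h (f (inv_into M h x) (inv_into M h y))"
      using that bij hom[OF M_elems] by (simp add: bij_betw_inv_into_right)
    moreover have "f (inv_into M h x) (inv_into M h y) \<in> M"
      using assms(1) M_elems by (rule magmaD)
    ultimately show ?thesis
      using bij by (simp add: bij_betw_inv_into_left)
  qed
  then show ?thesis
    using bij_betw_inv_into[OF bij] by (simp add: magma_iso_def)
qed

lemma magma_free_magma: "magma (free_magma A) Node"
  by (simp add: magma_def)

lemma equidecomposable_free_magma: "equidecomposable (free_magma A) Node"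
  by (simp add: equidecomposable_def)

lemma Indec_free_magma: "Indec (free_magma A) Node = Gen ` A"
proof -
  have "t \<in> Indec (free_magma A) Node \<longleftrightarrow> t \<in> Gen ` A" for t
    by (cases t) (auto simp: Indec_def)
  then show ?thesis
    by blast
qed

lemma magma_prod:
  "magma M f \<Longrightarrow> magma N g \<Longrightarrow> magma (M \<times> N) (prod_op f g)"
  by (auto simp: magma_def prod_op_def)

lemma equidecomposable_prod:
  "equidecomposable M f \<Longrightarrow> equidecomposable N g \<Longrightarrow> equidecomposable (M \<times> N) (prod_op f g)"
  by (auto simp: equidecomposable_def prod_op_def)

lemma Indec_prod:
  "Indec (M \<times> N) (prod_op f g) = (Indec M f \<times> N) \<union> (M \<times> Indec N g)"
  by (auto simp: Indec_def prod_op_def)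

theorem theorem5p12:
  fixes A :: "'a set" and M :: "'m set" and f :: "'m \<Rightarrow> 'm \<Rightarrow> 'm"
  assumes "A \<noteq> {}"
    and "magma M f"
    and "equidecomposable M f"
  shows "magma_isomorphic
           (free_magma A \<times> M) (prod_op Node f)
           (free_magma ((Gen ` A \<times> M) \<union> (free_magma A \<times> Indec M f))) Node"
proof -
  let ?P = "free_magma A \<times> M" and ?op = "prod_op Node f"
  have P_magma: "magma ?P ?op"
    using magma_prod[OF magma_free_magma assms(2)] .
  have "magma_iso (free_magma (Indec ?P ?op)) Node ?P ?op (eval_fmagma ?op)"
  proof (rule magma_iso_eval_fmagma_Indec[where \<mu> = "size \<circ> fst"])
    show "equidecomposable ?P ?op"
      using equidecomposable_prod[OF equidecomposable_free_magma assms(3)] .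
  qed (use P_magma in \<open>auto simp: prod_op_def\<close>)
  moreover have "Indec ?P ?op = (Gen ` A \<times> M) \<union> (free_magma A \<times> Indec M f)"
    by (simp add: Indec_prod Indec_free_magma)
  ultimately show ?thesis
    unfolding magma_isomorphic_def using magma_iso_inv_into[OF magma_free_magma] by metis
qed

end
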